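(* Let $H$ be a group which is the union of finitely many subsets $S_1,\dots,S_n$: $H=\bigcup_{i=1}^n S_i$. For each $i$ set $C_i:=\langle ab^{-1}\mid a,b\in S_i\rangle$. Then at least one of the subgroups $C_1,\dots,C_n$ has index at most $n$ in $H$. *)

theory Defs
  imports "HOL-Algebra.Algebra"
begin

end

theory Submission
  imports Defs
begin

(*
  B. H. Neumann's covering lemma: if a group G is the union of finitely many right cosets
  H_1 g_1, ..., H_m g_m, then some H_j has finite index at most m.  The theorem follows by
  applying this to the cover S_i \<subseteq> C_i g_i (any g_i \<in> S_i), since C_i contains a b^-1 for a, b \<in> S_i.

  After some counting facts about cosets (translation invariance,
  multiplicativity of the index, Poincare's theorem on intersections) the proof has three steps:
  1. G is never covered by finitely many cosets of infinite-index subgroups;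
  2. hence the cosets of finite-index subgroups in a cover already cover G;
  3. counting cosets of the intersection D of these subgroups gives [G:D] <= sum_j [G:D]/[G:H_j],
     so some [G:H_j] <= m.
*)

lemma pigeonhole_index:
  fixes c a :: "'j \<Rightarrow> nat"
  assumes "finite J" and "0 < N" and "N \<le> (\<Sum>j\<in>J. c j)"
    and "\<And>j. j \<in> J \<Longrightarrow> c j * a j = N"
  shows "\<exists>j\<in>J. a j \<le> card J"
proof (rule ccontr)
  assume "\<not> ?thesis"
  then have big: "card J + 1 \<le> a j" if "j \<in> J" for j
    using that by fastforce
  have "(card J + 1) * N \<le> (card J + 1) * (\<Sum>j\<in>J. c j)"
    using assms(3) by (rule mult_le_mono2)
  also have "\<dots> = (\<Sum>j\<in>J. (card J + 1) * c j)"
    by (rule sum_distrib_left)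
  also have "\<dots> \<le> (\<Sum>j\<in>J. a j * c j)"
    using big by (intro sum_mono mult_right_mono) auto
  also have "\<dots> = card J * N"
    using assms(4) by (simp add: mult.commute)
  finally show False
    using assms(2) by simp
qed

lemma finite_image_through:
  assumes "finite (g ` A)"
    and "\<And>x y. x \<in> A \<Longrightarrow> y \<in> A \<Longrightarrow> g x = g y \<Longrightarrow> f x = f y"
  shows "finite (f ` A)"
proof -
  define h where "h v = (SOME x. x \<in> A \<and> g x = v)" for v
  have h: "h (g a) \<in> A \<and> g (h (g a)) = g a" if "a \<in> A" for a
    unfolding h_def by (rule someI[of _ a]) (simp add: that)
  have "f ` A \<subseteq> (f \<circ> h) ` (g ` A)"
  proof
    fix u assume "u \<in> f ` A"
    then obtain a where a: "a \<in> A" "u = f a"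
      by blast
    have "f (h (g a)) = f a"
      using h[OF a(1)] a(1) by (intro assms(2)) auto
    then have "u = (f \<circ> h) (g a)"
      using a(2) by simp
    then show "u \<in> (f \<circ> h) ` (g ` A)"
      using a(1) by blast
  qed
  then show ?thesis
    using assms(1) finite_subset by blast
qed

definition coset_cover :: "('a, 'b) monoid_scheme \<Rightarrow> ('a set \<times> 'a) set \<Rightarrow> bool" where
  "coset_cover G P \<longleftrightarrow> finite P \<and> (\<forall>(H, g)\<in>P. subgroup H G \<and> g \<in> carrier G)
     \<and> carrier G \<subseteq> (\<Union>(H, g)\<in>P. H #>\<^bsub>G\<^esub> g)"

lemma coset_coverI:
  assumes "finite P" and "\<And>H g. (H, g) \<in> P \<Longrightarrow> subgroup H G \<and> g \<in> carrier G"
    and "carrier G \<subseteq> (\<Union>(H, g)\<in>P. H #>\<^bsub>G\<^esub> g)"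
  shows "coset_cover G P"
  using assms by (auto simp: coset_cover_def)

lemma coset_coverD:
  assumes "coset_cover G P"
  shows "finite P" and "\<And>H g. (H, g) \<in> P \<Longrightarrow> subgroup H G"
    and "\<And>H g. (H, g) \<in> P \<Longrightarrow> g \<in> carrier G"
    and "carrier G \<subseteq> (\<Union>(H, g)\<in>P. H #>\<^bsub>G\<^esub> g)"
  using assms by (auto simp: coset_cover_def)

lemma coset_coverE:
  assumes "coset_cover G P" and "y \<in> carrier G"
  obtains H g where "(H, g) \<in> P" and "y \<in> H #>\<^bsub>G\<^esub> g"
proof -
  obtain p where "p \<in> P" "y \<in> fst p #>\<^bsub>G\<^esub> snd p"
    using subsetD[OF coset_coverD(4)[OF assms(1)] assms(2)] by (auto simp: split_beta)
  then show ?thesis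
    using that[of "fst p" "snd p"] by simp
qed

definition translates :: "('a, 'b) monoid_scheme \<Rightarrow> ('a set \<times> 'a) set \<Rightarrow> 'a set \<Rightarrow> ('a set \<times> 'a) set"
  where "translates G Q T = (\<lambda>((K, k), t). (K, k \<otimes>\<^bsub>G\<^esub> t)) ` (Q \<times> T)"

lemma mem_translates:
  "(K, k') \<in> translates G Q T \<longleftrightarrow> (\<exists>k t. (K, k) \<in> Q \<and> t \<in> T \<and> k' = k \<otimes>\<^bsub>G\<^esub> t)"
  unfolding translates_def by force

lemma fst_translates: "fst ` translates G Q T \<subseteq> fst ` Q"
  by (force simp: translates_def)

context group
begin

lemma rcosets_eq_image: "rcosets H = (\<lambda>x. H #> x) ` carrier G"
  by (auto simp: RCOSETS_def)

lemma rcos_eq_iff_mem: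
  assumes "subgroup H G" "x \<in> carrier G" "y \<in> carrier G"
  shows "H #> x = H #> y \<longleftrightarrow> x \<in> H #> y"
proof
  assume "H #> x = H #> y"
  then show "x \<in> H #> y"
    using repr_independenceD[OF assms(1,2), of y] by simp
next
  assume "x \<in> H #> y"
  then show "H #> x = H #> y"
    using repr_independence[OF _ assms(3,1)] by simp
qed

lemma rcos_mono: "D \<subseteq> H \<Longrightarrow> D #> x \<subseteq> H #> x"
  by (auto simp: r_coset_def)

lemma cosets_meeting_translate:
  assumes "D \<subseteq> carrier G" "A \<subseteq> carrier G" "c \<in> carrier G"
  shows "(\<lambda>x. D #> x) ` (A #> c) = (\<lambda>C. C #> c) ` ((\<lambda>x. D #> x) ` A)"
proof -
  have "A #> c = (\<lambda>a. a \<otimes> c) ` A"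
    by (auto simp: r_coset_def)
  then have "(\<lambda>x. D #> x) ` (A #> c) = (\<lambda>a. D #> (a \<otimes> c)) ` A"
    by (simp only: image_image)
  also have "\<dots> = (\<lambda>a. (D #> a) #> c) ` A"
    using assms by (intro image_cong) (auto simp: coset_mult_assoc)
  also have "\<dots> = (\<lambda>C. C #> c) ` ((\<lambda>x. D #> x) ` A)"
    by (simp only: image_image)
  finally show ?thesis .
qed

lemma card_cosets_meeting_translate:
  assumes "subgroup D G" "A \<subseteq> carrier G" "c \<in> carrier G"
  shows "card ((\<lambda>x. D #> x) ` (A #> c)) = card ((\<lambda>x. D #> x) ` A)"
proof -
  have DG: "D \<subseteq> carrier G"
    using assms(1) by (rule subgroup.subset)
  have "inj_on (\<lambda>C. C #> c) ((\<lambda>x. D #> x) ` A)"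
  proof (rule inj_onI)
    have sub: "C \<subseteq> carrier G" if C: "C \<in> (\<lambda>x. D #> x) ` A" for C
    proof -
      obtain a where "a \<in> A" "C = D #> a"
        using C by blast
      then show ?thesis
        using r_coset_subset_G[OF DG, of a] assms(2) by blast
    qed
    have undo: "(C #> c) #> inv c = C" if "C \<in> (\<lambda>x. D #> x) ` A" for C
      using sub[OF that] assms(3) by (simp add: coset_mult_assoc)
    fix C C' assume "C \<in> (\<lambda>x. D #> x) ` A" "C' \<in> (\<lambda>x. D #> x) ` A" "C #> c = C' #> c"
    then show "C = C'"
      using undo by metis
  qed
  then show ?thesis
    using cosets_meeting_translate[OF DG assms(2,3)] by (simp add: card_image)
qed

(* Multiplicativity of the index, [G:D] = [G:H] * [H:D] for D <= H, for arbitrary (possibly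
   infinite) groups: the D-cosets are partitioned according to the H-coset containing them,
   and every H-coset contains as many D-cosets as H itself. *)
lemma card_rcosets_mult:
  assumes D: "subgroup D G" and H: "subgroup H G" and "D \<subseteq> H"
    and fin: "finite (rcosets D)" "finite (rcosets H)"
  shows "card (rcosets D) = card (rcosets H) * card ((\<lambda>x. D #> x) ` H)"
proof -
  have HG: "H \<subseteq> carrier G"
    using H by (rule subgroup.subset)
  have part: "rcosets D = (\<Union>C\<in>rcosets H. (\<lambda>x. D #> x) ` C)"
  proof -
    have "rcosets D = (\<lambda>x. D #> x) ` \<Union>(rcosets H)"
      by (simp only: rcosets_part_G[OF H] rcosets_eq_image[of D])
    then show ?thesis
      by (simp only: image_Union)
  qed
  have disj: "(\<lambda>x. D #> x) ` C \<inter> (\<lambda>x. D #> x) ` C' = {}"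
    if C: "C \<in> rcosets H" "C' \<in> rcosets H" "C \<noteq> C'" for C C'
  proof (rule ccontr)
    assume "(\<lambda>x. D #> x) ` C \<inter> (\<lambda>x. D #> x) ` C' \<noteq> {}"
    then obtain x y where xy: "x \<in> C" "y \<in> C'" "D #> x = D #> y" by blast
    obtain g g' where g: "g \<in> carrier G" "C = H #> g" and g': "g' \<in> carrier G" "C' = H #> g'"
      using C(1,2) by (auto simp: rcosets_eq_image)
    have "x \<in> carrier G" "y \<in> carrier G"
      using xy(1,2) g g' HG r_coset_subset_G by blast+
    then have "x \<in> H #> y"
      using xy(3) rcos_eq_iff_mem[OF D] rcos_mono[OF assms(3)] by blast
    then show False
      using xy(1,2) g g' C(3) H by (metis repr_independence)
  qed
  have fin_part: "finite ((\<lambda>x. D #> x) ` C)" if "C \<in> rcosets H" for C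
    using fin(1) that part by (metis UN_upper finite_subset)
  have "card (rcosets D) = (\<Sum>C\<in>rcosets H. card ((\<lambda>x. D #> x) ` C))"
    unfolding part using fin(2) fin_part disj by (intro card_UN_disjoint) auto
  also have "\<dots> = (\<Sum>C\<in>rcosets H. card ((\<lambda>x. D #> x) ` H))"
  proof (rule sum.cong)
    fix C assume "C \<in> rcosets H"
    then obtain g where "g \<in> carrier G" "C = H #> g"
      by (auto simp: rcosets_eq_image)
    then show "card ((\<lambda>x. D #> x) ` C) = card ((\<lambda>x. D #> x) ` H)"
      using card_cosets_meeting_translate[OF D HG] by simp
  qed simp
  finally show ?thesis
    by simp
qed

(* Poincare: an intersection of finitely many subgroups of finite index has finite index.
   A D-coset is determined by the family of H-cosets containing it, of which there are finitely many. *)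
lemma finite_index_Inter:
  assumes "finite F" and F: "\<And>H. H \<in> F \<Longrightarrow> subgroup H G \<and> finite (rcosets H)"
  shows "subgroup (carrier G \<inter> \<Inter>F) G" and "finite (rcosets (carrier G \<inter> \<Inter>F))"
proof -
  have "subgroup (\<Inter>(insert (carrier G) F)) G"
    using F subgroup_self by (intro subgroups_Inter) auto
  then show D: "subgroup (carrier G \<inter> \<Inter>F) G"
    by simp
  let ?profile = "\<lambda>x. \<lambda>H\<in>F. H #> x"
  have "?profile ` carrier G \<subseteq> (\<Pi>\<^sub>E H\<in>F. rcosets H)"
    using F subgroup.subset by (fastforce intro!: rcosetsI)
  then have "finite (?profile ` carrier G)"
    using assms(1) F by (meson finite_PiE finite_subset)
  moreover have "(carrier G \<inter> \<Inter>F) #> x = (carrier G \<inter> \<Inter>F) #> y"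
    if "x \<in> carrier G" "y \<in> carrier G" "?profile x = ?profile y" for x y
  proof -
    have "x \<otimes> inv y \<in> H" if "H \<in> F" for H
      using \<open>?profile x = ?profile y\<close> \<open>H \<in> F\<close> F[OF \<open>H \<in> F\<close>] \<open>x \<in> carrier G\<close> \<open>y \<in> carrier G\<close>
      by (metis restrict_apply' rcos_self subgroup.rcos_module_imp is_group)
    then have "x \<in> (carrier G \<inter> \<Inter>F) #> y"
      using that(1,2) by (intro subgroup.rcos_module_rev[OF D is_group]) auto
    then show ?thesis
      using that(1,2) rcos_eq_iff_mem[OF D] by blast
  qed
  ultimately show "finite (rcosets (carrier G \<inter> \<Inter>F))"
    unfolding rcosets_eq_image by (rule finite_image_through)
qed

lemma translates_cover:
  assumes Q: "\<And>K k. (K, k) \<in> Q \<Longrightarrow> K \<subseteq> carrier G \<and> k \<in> carrier G"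
    and A: "A \<subseteq> (\<Union>(K, k)\<in>Q. K #> k)" and t: "t \<in> T" "t \<in> carrier G"
  shows "A #> t \<subseteq> (\<Union>(K, k)\<in>translates G Q T. K #> k)"
proof
  fix y assume "y \<in> A #> t"
  then obtain a where "a \<in> A" "y = a \<otimes> t"
    by (auto simp: r_coset_def)
  moreover obtain K k where Kk: "(K, k) \<in> Q" "a \<in> K #> k"
    using A \<open>a \<in> A\<close> by blast
  ultimately have "y \<in> (K #> k) #> t"
    by (auto simp: r_coset_def)
  also have "(K #> k) #> t = K #> (k \<otimes> t)"
    using Q[OF Kk(1)] t(2) by (simp add: coset_mult_assoc)
  finally have "y \<in> K #> (k \<otimes> t)" .
  moreover have "(K, k \<otimes> t) \<in> translates G Q T"
    using Kk(1) t(1) by (auto simp: mem_translates)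
  ultimately show "y \<in> (\<Union>(K, k)\<in>translates G Q T. K #> k)"
    by force
qed

lemma coset_cover_translates:
  assumes Q: "finite Q" "\<And>K k. (K, k) \<in> Q \<Longrightarrow> subgroup K G \<and> k \<in> carrier G"
    and T: "finite T" "T \<subseteq> carrier G"
    and A: "A \<subseteq> (\<Union>(K, k)\<in>Q. K #> k)"
    and cov: "carrier G \<subseteq> (\<Union>(K, k)\<in>Q. K #> k) \<union> (\<Union>t\<in>T. A #> t)"
  shows "coset_cover G (Q \<union> translates G Q T)"
proof (rule coset_coverI)
  show "finite (Q \<union> translates G Q T)"
    using Q(1) T(1) by (simp add: translates_def)
  show "subgroup K G \<and> k \<in> carrier G" if "(K, k) \<in> Q \<union> translates G Q T" for K k
    using that Q(2) T(2) by (auto simp: mem_translates)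
  have "K \<subseteq> carrier G \<and> k \<in> carrier G" if "(K, k) \<in> Q" for K k
    using Q(2)[OF that] subgroup.subset by blast
  then have "(\<Union>t\<in>T. A #> t) \<subseteq> (\<Union>(K, k)\<in>translates G Q T. K #> k)"
    using T(2) by (intro UN_least translates_cover[OF _ A]) auto
  then have "carrier G \<subseteq> (\<Union>(K, k)\<in>Q. K #> k) \<union> (\<Union>(K, k)\<in>translates G Q T. K #> k)"
    by (rule order_trans[OF cov Un_mono[OF order_refl]])
  then show "carrier G \<subseteq> (\<Union>(K, k)\<in>Q \<union> translates G Q T. K #> k)"
    by (simp only: UN_Un)
qed

lemma missing_coset:
  assumes "infinite (rcosets H)" and "finite S"
  obtains x where "x \<in> carrier G" and "H #> x \<notin> (\<lambda>g. H #> g) ` S"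
proof -
  have "\<not> rcosets H \<subseteq> (\<lambda>g. H #> g) ` S"
    using assms(1) finite_subset[OF _ finite_imageI[OF assms(2)]] by blast
  then show ?thesis
    using that by (auto simp: rcosets_eq_image)
qed

lemma missing_coset_covered_by_others:
  assumes P: "coset_cover G P" and H: "subgroup H G"
    and x: "x \<in> carrier G" "H #> x \<notin> (\<lambda>g. H #> g) ` snd ` P"
  shows "H #> x \<subseteq> (\<Union>(K, k)\<in>{(K, k)\<in>P. K \<noteq> H}. K #> k)"
proof
  fix y assume y: "y \<in> H #> x"
  then have "y \<in> carrier G"
    using r_coset_subset_G[OF subgroup.subset[OF H] x(1)] by blast
  then obtain K k where Kk: "(K, k) \<in> P" "y \<in> K #> k"
    using coset_coverE[OF P] by blast
  have "K \<noteq> H"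
  proof
    assume "K = H"
    then have "H #> x = H #> k"
      using repr_independence[OF y x(1) H] repr_independence[OF _ coset_coverD(3)[OF P Kk(1)] H] Kk(2)
      by simp
    then show False
      using x(2) Kk(1) by force
  qed
  then show "y \<in> (\<Union>(K, k)\<in>{(K, k)\<in>P. K \<noteq> H}. K #> k)"
    using Kk by force
qed

(* Elimination of a subgroup H from a cover in which some coset H #> x is missing: since H #> x is
   covered by the other cosets, their translates by inv x * g cover every coset H #> g of the cover. *)
lemma eliminate_subgroup:
  assumes P: "coset_cover G P" and Hh: "(H, h) \<in> P"
    and x: "x \<in> carrier G" "H #> x \<notin> (\<lambda>g. H #> g) ` snd ` P"
  obtains P' where "coset_cover G P'" and "fst ` P' \<subseteq> fst ` P - {H}"
proof -
  note P' = coset_coverD[OF P]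
  have H: "subgroup H G"
    using P'(2)[OF Hh] .
  define Q where "Q = {(K, k)\<in>P. K \<noteq> H}"
  define T where "T = (\<lambda>g. inv x \<otimes> g) ` snd ` P"
  have cov: "carrier G \<subseteq> (\<Union>(K, k)\<in>Q. K #> k) \<union> (\<Union>t\<in>T. (H #> x) #> t)"
  proof
    fix y assume "y \<in> carrier G"
    then obtain K k where Kk: "(K, k) \<in> P" "y \<in> K #> k"
      using coset_coverE[OF P] by blast
    show "y \<in> (\<Union>(K, k)\<in>Q. K #> k) \<union> (\<Union>t\<in>T. (H #> x) #> t)"
    proof (cases "K = H")
      case True
      have "H #> k = (H #> x) #> (inv x \<otimes> k)"
        using H x(1) P'(3)[OF Kk(1)] by (simp add: coset_mult_assoc subgroup.subset m_assoc[symmetric])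
      moreover have "inv x \<otimes> k \<in> T"
        using Kk(1) by (force simp: T_def)
      ultimately show ?thesis
        using Kk(2) True by auto
    qed (use Kk in \<open>force simp: Q_def\<close>)
  qed
  have "finite Q"
    using P'(1) by (rule rev_finite_subset) (auto simp: Q_def)
  moreover have "subgroup K G \<and> k \<in> carrier G" if "(K, k) \<in> Q" for K k
    using that P'(2,3) by (auto simp: Q_def)
  moreover have "finite T"
    using P'(1) by (simp add: T_def)
  moreover have "T \<subseteq> carrier G"
    using P'(3) x(1) by (auto simp: T_def)
  moreover have "H #> x \<subseteq> (\<Union>(K, k)\<in>Q. K #> k)"
    unfolding Q_def by (rule missing_coset_covered_by_others[OF P H x])
  ultimately have "coset_cover G (Q \<union> translates G Q T)"
    using cov by (rule coset_cover_translates)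
  moreover have QH: "fst ` Q \<subseteq> fst ` P - {H}"
    unfolding Q_def by auto
  have "fst ` (Q \<union> translates G Q T) \<subseteq> fst ` P - {H}"
    unfolding image_Un by (rule Un_least[OF QH order_trans[OF fst_translates QH]])
  ultimately show ?thesis
    by (rule that)
qed

(* Step 1 (Neumann): a finite coset cover always contains a subgroup of finite index.
   Induction on the number of distinct subgroups, eliminating one subgroup of infinite index. *)
lemma coset_cover_finite_index:
  assumes "coset_cover G P"
  shows "\<exists>(H, g)\<in>P. finite (rcosets H)"
  using assms
proof (induction "card (fst ` P)" arbitrary: P rule: less_induct)
  case less
  show ?case
  proof (rule ccontr)
    assume "\<not> (\<exists>(H, g)\<in>P. finite (rcosets H))"
    then have inf: "infinite (rcosets K)" if "K \<in> fst ` P" for K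
      using that by force
    obtain H h where Hh: "(H, h) \<in> P"
      using coset_coverE[OF less.prems one_closed] by blast
    then have HP: "H \<in> fst ` P"
      by force
    have finP: "finite P"
      using coset_coverD(1)[OF less.prems] .
    obtain x where x: "x \<in> carrier G" "H #> x \<notin> (\<lambda>g. H #> g) ` snd ` P"
      using missing_coset[OF inf[OF HP] finite_imageI[OF finP]] by blast
    obtain P' where P': "coset_cover G P'" "fst ` P' \<subseteq> fst ` P - {H}"
      using eliminate_subgroup[OF less.prems Hh x] .
    have "card (fst ` P') \<le> card (fst ` P - {H})"
      using finP P'(2) by (intro card_mono) auto
    also have "\<dots> < card (fst ` P)"
      using finite_imageI[OF finP] HP by (rule card_Diff1_less)
    finally have "\<exists>(K, k)\<in>P'. finite (rcosets K)"
      using P'(1) by (rule less.hyps)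
    then obtain K k where Kk: "(K, k) \<in> P'" "finite (rcosets K)"
      by blast
    have "K \<in> fst ` P'"
      using Kk(1) by force
    then have "K \<in> fst ` P"
      using P'(2) by blast
    then show False
      using inf Kk(2) by simp
  qed
qed

lemma intersection_coset_avoids:
  assumes P: "coset_cover G P" and "Q \<subseteq> P"
    and y0: "y0 \<in> carrier G" "y0 \<notin> (\<Union>(H, g)\<in>Q. H #> g)"
  shows "(carrier G \<inter> \<Inter>(fst ` Q)) #> y0 \<subseteq> (\<Union>(K, k)\<in>P - Q. K #> k)"
proof
  fix z assume z: "z \<in> (carrier G \<inter> \<Inter>(fst ` Q)) #> y0"
  then have "z \<in> carrier G"
    using r_coset_subset_G[of "carrier G \<inter> \<Inter>(fst ` Q)" y0] y0(1) by blast
  then obtain K k where Kk: "(K, k) \<in> P" "z \<in> K #> k"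
    using coset_coverE[OF P] by blast
  have "(K, k) \<notin> Q"
  proof
    assume KkQ: "(K, k) \<in> Q"
    have K: "subgroup K G" "k \<in> carrier G"
      using coset_coverD(2,3)[OF P Kk(1)] .
    have "K \<in> fst ` Q"
      using KkQ by force
    then have "z \<in> K #> y0"
      using z rcos_mono[of "carrier G \<inter> \<Inter>(fst ` Q)" K y0] by blast
    then have "K #> y0 = K #> z"
      by (rule repr_independence[OF _ y0(1) K(1)])
    also have "\<dots> = K #> k"
      using repr_independence[OF Kk(2) K(2,1)] by simp
    finally have "y0 \<in> K #> k"
      using rcos_self[OF y0(1) K(1)] by simp
    then show False
      using y0(2) KkQ by blast
  qed
  then show "z \<in> (\<Union>(K, k)\<in>P - Q. K #> k)"
    using Kk by blast
qed

lemma finitely_many_translates_cover: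
  assumes D: "subgroup D G" and finD: "finite (rcosets D)" and y0: "y0 \<in> carrier G"
  obtains T where "finite T" and "T \<subseteq> carrier G" and "carrier G \<subseteq> (\<Union>t\<in>T. (D #> y0) #> t)"
proof -
  have "rcosets D \<subseteq> (\<lambda>x. D #> x) ` carrier G"
    by (simp add: rcosets_eq_image)
  then obtain Xs where Xs: "Xs \<subseteq> carrier G" "finite Xs" "rcosets D = (\<lambda>x. D #> x) ` Xs"
    using finite_subset_image[OF finD] by metis
  define T where "T = (\<lambda>x. inv y0 \<otimes> x) ` Xs"
  have "carrier G \<subseteq> (\<Union>t\<in>T. (D #> y0) #> t)"
  proof
    fix y assume y: "y \<in> carrier G"
    then have "D #> y \<in> (\<lambda>x. D #> x) ` Xs"
      using Xs(3) by (auto simp: rcosets_eq_image)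
    then obtain x where x: "x \<in> Xs" "D #> y = D #> x"
      by blast
    have "D #> x = (D #> y0) #> (inv y0 \<otimes> x)"
      using x(1) Xs(1) y0 D by (auto simp: coset_mult_assoc subgroup.subset m_assoc[symmetric])
    moreover have "y \<in> D #> y"
      using y D by (rule rcos_self)
    ultimately show "y \<in> (\<Union>t\<in>T. (D #> y0) #> t)"
      using x by (auto simp: T_def)
  qed
  moreover have "finite T" "T \<subseteq> carrier G"
    using Xs(1,2) y0 by (auto simp: T_def)
  ultimately show ?thesis
    using that by blast
qed

(* Step 2: the cosets of finite-index subgroups in a finite coset cover cover the group by themselves.
   A point y0 outside them gives a coset D #> y0 of the finite-index subgroup D (the intersection of
   the finite-index subgroups) that is covered by the infinite-index cosets alone; finitely many
   translates of D #> y0 exhaust the group, contradicting step 1. *)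
lemma finite_index_part_covers:
  assumes P: "coset_cover G P"
  shows "coset_cover G {(H, g)\<in>P. finite (rcosets H)}"
proof -
  note P' = coset_coverD[OF P]
  define Q where "Q = {(H, g)\<in>P. finite (rcosets H)}"
  define D where "D = carrier G \<inter> \<Inter>(fst ` Q)"
  have "finite Q"
    using P'(1) by (rule rev_finite_subset) (auto simp: Q_def)
  have "subgroup H G \<and> finite (rcosets H)" if "H \<in> fst ` Q" for H
    using that P'(2) by (auto simp: Q_def)
  then have D: "subgroup D G" and finD: "finite (rcosets D)"
    unfolding D_def using finite_index_Inter[OF finite_imageI[OF \<open>finite Q\<close>]] by blast+
  have "carrier G \<subseteq> (\<Union>(H, g)\<in>Q. H #> g)"
  proof
    fix y0 assume y0: "y0 \<in> carrier G"
    show "y0 \<in> (\<Union>(H, g)\<in>Q. H #> g)"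
    proof (rule ccontr)
      assume y0_out: "y0 \<notin> (\<Union>(H, g)\<in>Q. H #> g)"
      have "Q \<subseteq> P"
        by (auto simp: Q_def)
      then have Dy0: "D #> y0 \<subseteq> (\<Union>(K, k)\<in>P - Q. K #> k)"
        unfolding D_def by (rule intersection_coset_avoids[OF P _ y0 y0_out])
      obtain T where T: "finite T" "T \<subseteq> carrier G" "carrier G \<subseteq> (\<Union>t\<in>T. (D #> y0) #> t)"
        using finitely_many_translates_cover[OF D finD y0] .
      have "finite (P - Q)"
        using P'(1) by simp
      moreover have "subgroup K G \<and> k \<in> carrier G" if "(K, k) \<in> P - Q" for K k
        using that P'(2,3) by blast
      moreover have "carrier G \<subseteq> (\<Union>(K, k)\<in>P - Q. K #> k) \<union> (\<Union>t\<in>T. (D #> y0) #> t)"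
        using T(3) by (rule subset_trans) (rule Un_upper2)
      ultimately have "coset_cover G ((P - Q) \<union> translates G (P - Q) T)"
        by (rule coset_cover_translates[OF _ _ T(1,2) Dy0])
      then have "\<exists>(K, k)\<in>(P - Q) \<union> translates G (P - Q) T. finite (rcosets K)"
        by (rule coset_cover_finite_index)
      then obtain K k where Kk: "(K, k) \<in> (P - Q) \<union> translates G (P - Q) T" "finite (rcosets K)"
        by blast
      have "K \<in> fst ` (P - Q) \<union> fst ` translates G (P - Q) T"
        using Kk(1) by force
      then have "K \<in> fst ` (P - Q)"
        using fst_translates[of G "P - Q" T] by blast
      then show False
        using Kk(2) by (auto simp: Q_def)
    qed
  qed
  then show ?thesis
    using \<open>finite Q\<close> P'(2,3) unfolding Q_def by (intro coset_coverI) auto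
qed

(* Counting D-cosets along a cover: each D-coset meets some covering coset H #> g, and
   H #> g meets as many D-cosets as H does. *)
lemma card_rcosets_le_cover:
  assumes P: "coset_cover G P" and D: "subgroup D G" and finD: "finite (rcosets D)"
  shows "card (rcosets D) \<le> (\<Sum>p\<in>P. card ((\<lambda>x. D #> x) ` fst p))"
proof -
  note P' = coset_coverD[OF P]
  have carr: "fst p \<subseteq> carrier G" "snd p \<in> carrier G" if "p \<in> P" for p
    using that subgroup.subset[OF P'(2)] P'(3) by (cases p; force)+
  have sub: "(\<lambda>x. D #> x) ` (fst p #> snd p) \<subseteq> rcosets D" if "p \<in> P" for p
    using r_coset_subset_G[OF carr[OF that]] by (auto simp: rcosets_eq_image)
  have covD: "rcosets D \<subseteq> (\<Union>p\<in>P. (\<lambda>x. D #> x) ` (fst p #> snd p))"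
  proof
    fix C assume "C \<in> rcosets D"
    then obtain y where y: "y \<in> carrier G" "C = D #> y"
      by (auto simp: rcosets_eq_image)
    then obtain H g where "(H, g) \<in> P" "y \<in> H #> g"
      using coset_coverE[OF P] by blast
    then show "C \<in> (\<Union>p\<in>P. (\<lambda>x. D #> x) ` (fst p #> snd p))"
      using y(2) by force
  qed
  have "(\<Union>p\<in>P. (\<lambda>x. D #> x) ` (fst p #> snd p)) \<subseteq> rcosets D"
    using sub by (rule UN_least)
  then have "finite (\<Union>p\<in>P. (\<lambda>x. D #> x) ` (fst p #> snd p))"
    using finD by (rule finite_subset)
  then have "card (rcosets D) \<le> card (\<Union>p\<in>P. (\<lambda>x. D #> x) ` (fst p #> snd p))"
    using covD by (rule card_mono)
  also have "\<dots> \<le> (\<Sum>p\<in>P. card ((\<lambda>x. D #> x) ` (fst p #> snd p)))"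
    using P'(1) by (rule card_UN_le)
  also have "\<dots> = (\<Sum>p\<in>P. card ((\<lambda>x. D #> x) ` fst p))"
    using carr by (intro sum.cong card_cosets_meeting_translate[OF D]) auto
  finally show ?thesis .
qed

(* Count the cosets of D, the intersection of all the subgroups: each coset H #> g
   meets [H:D] = [G:D]/[G:H] of them, so [G:D] <= sum [G:D]/[G:H]. *)
lemma small_index_in_finite_index_cover:
  assumes P: "coset_cover G P" and fin: "\<And>H g. (H, g) \<in> P \<Longrightarrow> finite (rcosets H)"
  shows "\<exists>(H, g)\<in>P. card (rcosets H) \<le> card P"
proof -
  note P' = coset_coverD[OF P]
  define D where "D = carrier G \<inter> \<Inter>(fst ` P)"
  define N where "N = card (rcosets D)"
  define c where "c p = card ((\<lambda>x. D #> x) ` fst p)" for p :: "'a set \<times> 'a"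
  have "subgroup H G \<and> finite (rcosets H)" if "H \<in> fst ` P" for H
    using that P'(2) fin by force
  then have D: "subgroup D G" and finD: "finite (rcosets D)"
    unfolding D_def using finite_index_Inter[OF finite_imageI[OF P'(1)]] by blast+
  have "D #> \<one> \<in> rcosets D"
    using D by (intro rcosetsI subgroup.subset) auto
  then have "0 < N"
    using finD by (auto simp: N_def card_gt_0_iff)
  have index: "c p * card (rcosets (fst p)) = N" if "p \<in> P" for p
  proof -
    obtain H g where p: "p = (H, g)"
      by fastforce
    have "D \<subseteq> H"
      using that p by (force simp: D_def)
    then show ?thesis
      using card_rcosets_mult[OF D P'(2) _ finD fin] that p by (simp add: c_def N_def)
  qed
  have "N \<le> (\<Sum>p\<in>P. c p)"
    unfolding N_def c_def by (rule card_rcosets_le_cover[OF P D finD])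
  then have "\<exists>p\<in>P. card (rcosets (fst p)) \<le> card P"
    using pigeonhole_index[of P N c "\<lambda>p. card (rcosets (fst p))"] P'(1) \<open>0 < N\<close> index
    by blast
  then show ?thesis
    by force
qed

theorem neumann_index_bound:
  assumes "coset_cover G P"
  shows "\<exists>(H, g)\<in>P. finite (rcosets H) \<and> card (rcosets H) \<le> card P"
proof -
  define Q where "Q = {(H, g)\<in>P. finite (rcosets H)}"
  have "coset_cover G Q"
    unfolding Q_def using assms by (rule finite_index_part_covers)
  moreover have "finite (rcosets H)" if "(H, g) \<in> Q" for H g
    using that by (simp add: Q_def)
  ultimately obtain H g where "(H, g) \<in> Q" "card (rcosets H) \<le> card Q"
    using small_index_in_finite_index_cover by blast
  moreover have "card Q \<le> card P"
    using coset_coverD(1)[OF assms] by (intro card_mono) (auto simp: Q_def)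
  ultimately show ?thesis
    by (force simp: Q_def)
qed

lemma subset_difference_coset:
  assumes "S \<subseteq> carrier G" and "g \<in> S"
  shows "S \<subseteq> generate G {a \<otimes> inv b | a b. a \<in> S \<and> b \<in> S} #> g"
proof
  fix x assume x: "x \<in> S"
  let ?C = "generate G {a \<otimes> inv b | a b. a \<in> S \<and> b \<in> S}"
  have "?C \<subseteq> carrier G"
    using assms(1) by (intro generate_incl) auto
  moreover have "x \<otimes> inv g \<in> ?C"
    using x assms(2) by (blast intro: generate.incl)
  ultimately have "(x \<otimes> inv g) \<otimes> g \<in> ?C #> g"
    using assms by (intro rcosI) auto
  then show "x \<in> ?C #> g"
    using x assms by (simp add: m_assoc subsetD)
qed

lemma difference_coset_cover:
  assumes cov: "carrier G = (\<Union>i\<in>I. S i)" and "finite I"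
  obtains P where "coset_cover G P" and "card P \<le> card I"
    and "\<And>H h. (H, h) \<in> P \<Longrightarrow> \<exists>i\<in>I. H = generate G {a \<otimes> inv b | a b. a \<in> S i \<and> b \<in> S i}"
proof -
  define C where "C i = generate G {a \<otimes> inv b | a b. a \<in> S i \<and> b \<in> S i}" for i
  define J where "J = {i\<in>I. S i \<noteq> {}}"
  define g where "g i = (SOME x. x \<in> S i)" for i
  define P where "P = (\<lambda>i. (C i, g i)) ` J"
  have SJ: "S i \<subseteq> carrier G" if "i \<in> J" for i
    using that cov by (auto simp: J_def)
  have g: "g i \<in> S i" if "i \<in> J" for i
    using that some_in_eq by (auto simp: J_def g_def)
  have cover: "S i \<subseteq> C i #> g i" if "i \<in> J" for i
    unfolding C_def using SJ[OF that] g[OF that] by (rule subset_difference_coset)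
  have C: "subgroup (C i) G" if "i \<in> J" for i
    unfolding C_def using SJ[OF that] by (intro generate_is_subgroup) auto
  have "coset_cover G P"
  proof (rule coset_coverI)
    show "finite P"
      using \<open>finite I\<close> by (simp add: P_def J_def)
    show "subgroup H G \<and> h \<in> carrier G" if Hh: "(H, h) \<in> P" for H h
    proof -
      obtain i where "i \<in> J" "H = C i" "h = g i"
        using Hh by (auto simp: P_def)
      then show ?thesis
        using C SJ g by blast
    qed
    show "carrier G \<subseteq> (\<Union>(H, h)\<in>P. H #> h)"
    proof
      fix x assume "x \<in> carrier G"
      then obtain i where i: "i \<in> I" "x \<in> S i"
        using cov by blast
      then have "i \<in> J" "(C i, g i) \<in> P"
        by (auto simp: J_def P_def)
      then show "x \<in> (\<Union>(H, h)\<in>P. H #> h)"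
        using cover i(2) by force
    qed
  qed
  moreover have "card P \<le> card I"
  proof -
    have "card P \<le> card J"
      unfolding P_def by (rule card_image_le) (use \<open>finite I\<close> in \<open>simp add: J_def\<close>)
    also have "\<dots> \<le> card I"
      using \<open>finite I\<close> by (intro card_mono) (auto simp: J_def)
    finally show ?thesis .
  qed
  moreover have "\<exists>i\<in>I. H = C i" if "(H, h) \<in> P" for H h
    using that by (auto simp: P_def J_def)
  ultimately show ?thesis
    using that unfolding C_def by blast
qed

end

theorem corollary2p3:
  fixes G (structure) and S :: "nat \<Rightarrow> 'a set" and n :: nat
  assumes "group G"
    and "carrier G = (\<Union>i\<in>{1..n}. S i)"
  shows "\<exists>i\<in>{1..n}.
           finite (rcosets (generate G {a \<otimes> inv b | a b. a \<in> S i \<and> b \<in> S i}))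
         \<and> card (rcosets (generate G {a \<otimes> inv b | a b. a \<in> S i \<and> b \<in> S i})) \<le> n"
proof -
  interpret group G by fact
  obtain P where P: "coset_cover G P" "card P \<le> card {1..n}"
    and PS: "\<And>H h. (H, h) \<in> P \<Longrightarrow> \<exists>i\<in>{1..n}. H = generate G {a \<otimes> inv b | a b. a \<in> S i \<and> b \<in> S i}"
    using difference_coset_cover[OF assms(2)] by blast
  obtain H h where Hh: "(H, h) \<in> P" and "finite (rcosets H)" "card (rcosets H) \<le> card P"
    using neumann_index_bound[OF P(1)] by blast
  moreover obtain i where "i \<in> {1..n}" "H = generate G {a \<otimes> inv b | a b. a \<in> S i \<and> b \<in> S i}"
    using PS[OF Hh] by blast
  ultimately show ?thesis
    using P(2) by auto
qed

end
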